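(* Let $k$ be a fixed complex number. For every integer $n>0$, $$(\Lambda_A\ast\beta_k)(n)=A(n)\beta_k(n)-\beta_{k+1}(n).$$
   Context: $A(n)=\sum_{p^\alpha\parallel n}\alpha p$ is the sum of the prime factors of $n$ counted with multiplicity. $\Lambda_A(n)=p$ if $n=p^k$ for some prime $p$ and integer $k\geq1$, and $0$ otherwise. $\beta_k(n)=\sum_{p\mid n}p^k$ (sum over distinct primes dividing $n$). $\ast$ is Dirichlet convolution $(F\ast G)(n)=\sum_{d\mid n}F(d)G(n/d)$. *)

theory Defs
  imports "HOL-Analysis.Analysis" "HOL-Computational_Algebra.Primes"
begin

definition A_fun :: "nat \<Rightarrow> nat" where
  "A_fun n = (\<Sum>p\<in>prime_factors n. multiplicity p n * p)"

definition Lambda_A :: "nat \<Rightarrow> nat" where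
  "Lambda_A n = (if \<exists>p k. prime p \<and> k \<ge> 1 \<and> n = p ^ k
                 then (THE p. prime p \<and> (\<exists>k\<ge>1. n = p ^ k)) else 0)"

definition beta :: "complex \<Rightarrow> nat \<Rightarrow> complex" where
  "beta k n = (\<Sum>p\<in>prime_factors n. of_nat p powr k)"

definition dconv :: "(nat \<Rightarrow> complex) \<Rightarrow> (nat \<Rightarrow> complex) \<Rightarrow> nat \<Rightarrow> complex" where
  "dconv F G n = (\<Sum>d | d dvd n. F d * G (n div d))"

end

theory Submission
  imports Defs "HOL-Number_Theory.Prime_Powers"
begin

text \<open>Only the prime powers \<open>p ^ j\<close> with \<open>1 \<le> j \<le> \<nu>\<^sub>p(n)\<close> contribute to the convolution,
  each with weight \<open>p\<close>. Dividing \<open>n\<close> by such a \<open>p ^ j\<close> leaves the set of prime factors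
  unchanged unless \<open>j = \<nu>\<^sub>p(n)\<close>, when exactly \<open>p\<close> drops out. Hence the terms belonging to
  \<open>p\<close> add up to \<open>p (\<nu>\<^sub>p(n) \<beta>\<^sub>k(n) - p\<^sup>k)\<close>, and summing over \<open>p\<close> gives
  \<open>A(n) \<beta>\<^sub>k(n) - \<beta>\<^sub>k\<^sub>+\<^sub>1(n)\<close>.\<close>

lemma Lambda_A_altdef: "Lambda_A n = (if primepow n then aprimedivisor n else 0)"
proof (cases "primepow n")
  case True
  then obtain p j where pj: "prime p" "j > 0" "n = p ^ j"
    by (auto simp: primepow_def)
  have "(THE q. prime q \<and> (\<exists>i\<ge>1. n = q ^ i)) = p"
  proof (rule the_equality)
    fix q assume "prime q \<and> (\<exists>i\<ge>1. n = q ^ i)"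
    with pj show "q = p" by (auto simp: prime_power_inj'')
  qed (use pj in \<open>auto simp: Suc_le_eq\<close>)
  moreover have "\<exists>q i. prime q \<and> i \<ge> 1 \<and> n = q ^ i"
    using pj by (auto simp: Suc_le_eq)
  ultimately show ?thesis
    using True pj by (simp add: Lambda_A_def aprimedivisor_prime_power)
next
  case False
  then have "\<not> (\<exists>p j. prime p \<and> j \<ge> 1 \<and> n = p ^ j)"
    by (auto simp: primepow_def Suc_le_eq)
  with False show ?thesis
    unfolding Lambda_A_def by (simp only: if_False)
qed

lemma sum_divisors_primepow_support:
  fixes f :: "nat \<Rightarrow> 'a :: comm_monoid_add"
  assumes "n \<noteq> 0" and "\<And>d. d dvd n \<Longrightarrow> \<not> primepow d \<Longrightarrow> f d = 0"
  shows "(\<Sum>d | d dvd n. f d) = (\<Sum>p\<in>prime_factors n. \<Sum>j\<in>{0<..multiplicity p n}. f (p ^ j))"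
proof -
  let ?S = "SIGMA p:prime_factors n. {0<..multiplicity p n}"
  have "(\<Sum>d | d dvd n. f d) = (\<Sum>d\<in>primepow_factors n. f d)"
    using assms by (intro sum.mono_neutral_right) (auto simp: primepow_factors_def)
  also have "primepow_factors n = (\<lambda>(p, j). p ^ j) ` ?S"
    using assms(1) by (subst primepow_factors_altdef) fast+
  also have "(\<Sum>d\<in>(\<lambda>(p, j). p ^ j) ` ?S. f d) = (\<Sum>(p, j)\<in>?S. f (p ^ j))"
    by (subst sum.reindex)
       (auto simp: inj_on_def prime_power_inj'' prime_factors_multiplicity case_prod_unfold)
  also have "\<dots> = (\<Sum>p\<in>prime_factors n. \<Sum>j\<in>{0<..multiplicity p n}. f (p ^ j))"
    by (rule sum.Sigma [symmetric]) auto
  finally show ?thesis .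
qed

lemma multiplicity_div_prime_power:
  fixes n p q :: nat
  assumes "n \<noteq> 0" "prime p" "prime q" "j \<le> multiplicity p n"
  shows "multiplicity q (n div p ^ j) = multiplicity q n - (if q = p then j else 0)"
proof -
  have "p ^ j dvd n"
    using assms(4) by (rule multiplicity_dvd')
  then have "n = p ^ j * (n div p ^ j)" and "n div p ^ j \<noteq> 0"
    using assms(1) by auto
  then have "multiplicity q n = multiplicity q (p ^ j) + multiplicity q (n div p ^ j)"
    using assms(2,3) by (metis prime_elem_multiplicity_mult_distrib prime_imp_prime_elem
                          power_not_zero not_prime_0)
  moreover have "multiplicity q (p ^ j) = (if q = p then j else 0)"
    using assms(2,3) by (auto simp: prime_elem_multiplicity_power_distrib prime_multiplicity_other)
  ultimately show ?thesis by simp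
qed

lemma prime_factors_div_prime_power:
  fixes n p :: nat
  assumes "n \<noteq> 0" "prime p" "0 < j" "j \<le> multiplicity p n"
  shows "prime_factors (n div p ^ j) =
           (if j = multiplicity p n then prime_factors n - {p} else prime_factors n)"
  using assms multiplicity_div_prime_power[OF assms(1,2) _ assms(4)]
  by (auto simp: prime_factors_multiplicity)

lemma beta_div_prime_power:
  fixes n p :: nat
  assumes "n \<noteq> 0" "prime p" "0 < j" "j \<le> multiplicity p n"
  shows "beta k (n div p ^ j) = beta k n - (if j = multiplicity p n then of_nat p powr k else 0)"
proof -
  have "p \<in> prime_factors n"
    using assms by (auto simp: prime_factors_multiplicity)
  then show ?thesis
    using assms by (simp add: beta_def prime_factors_div_prime_power sum_diff1)
qed

lemma sum_prime_power_divisors_beta: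
  fixes n p :: nat
  assumes "n \<noteq> 0" "p \<in> prime_factors n"
  shows "(\<Sum>j\<in>{0<..multiplicity p n}. of_nat p * beta k (n div p ^ j))
           = of_nat (multiplicity p n * p) * beta k n - of_nat p powr (k + 1)"
proof -
  define m where "m = multiplicity p n"
  have "prime p" and "m > 0"
    using assms by (auto simp: m_def prime_factors_multiplicity)
  have "(\<Sum>j\<in>{0<..m}. of_nat p * beta k (n div p ^ j))
      = (\<Sum>j\<in>{0<..m}. of_nat p * beta k n - (if j = m then of_nat p * of_nat p powr k else 0))"
    using assms(1) \<open>prime p\<close>
    by (intro sum.cong) (auto simp: beta_div_prime_power m_def right_diff_distrib)
  also have "\<dots> = of_nat m * (of_nat p * beta k n) - of_nat p * of_nat p powr k"
    using \<open>m > 0\<close> by (simp add: sum_subtractf)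
  also have "of_nat p * of_nat p powr k = (of_nat p powr (k + 1) :: complex)"
    using \<open>prime p\<close> by (simp add: powr_add prime_gt_0_nat)
  finally show ?thesis
    by (simp add: m_def algebra_simps)
qed

theorem theorem3p4:
  fixes k :: complex and n :: nat
  assumes "n > 0"
  shows "dconv (\<lambda>d. of_nat (Lambda_A d)) (beta k) n
           = of_nat (A_fun n) * beta k n - beta (k + 1) n"
proof -
  have "dconv (\<lambda>d. of_nat (Lambda_A d)) (beta k) n
      = (\<Sum>p\<in>prime_factors n. \<Sum>j\<in>{0<..multiplicity p n}.
           of_nat (Lambda_A (p ^ j)) * beta k (n div p ^ j))"
    unfolding dconv_def using assms
    by (intro sum_divisors_primepow_support) (auto simp: Lambda_A_altdef)
  also have "\<dots> = (\<Sum>p\<in>prime_factors n. \<Sum>j\<in>{0<..multiplicity p n}.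
                     of_nat p * beta k (n div p ^ j))"
    by (intro sum.cong) (auto simp: Lambda_A_altdef aprimedivisor_prime_power in_prime_factors_iff)
  also have "\<dots> = (\<Sum>p\<in>prime_factors n.
                     of_nat (multiplicity p n * p) * beta k n - of_nat p powr (k + 1))"
    using assms by (intro sum.cong) (auto simp: sum_prime_power_divisors_beta)
  also have "\<dots> = of_nat (A_fun n) * beta k n - beta (k + 1) n"
    by (simp add: A_fun_def beta_def sum_subtractf sum_distrib_right)
  finally show ?thesis .
qed

end
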